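(* Let $n\geqslant 2$ and let $W=S_n$ with its standard Coxeter generators $S=\{s_1,\dots,s_{n-1}\}$. For $k\in\mathbb N$, define $$\phi_k:(S_n,\leqslant_{L^k})\to(W^{S\setminus\{s_1\}},\leqslant_{L^k})\times\cdots\times(W^{S\setminus\{s_{n-1}\}},\leqslant_{L^k})$$ by $\phi_k(w)=(P^{S\setminus\{s_1\}}(w),\dots,P^{S\setminus\{s_{n-1}\}}(w))$, where the target carries the product order. Let $\mathrm{Im}(\phi_k)$ be the image set $\{\phi_k(w):w\in S_n\}$ with the order induced from the product. Then $\mathrm{Im}(\phi_k)$ is isomorphic to the Bruhat order $(S_n,\leqslant)$, for every $k\in\mathbb N$.
   Context: $(W,S)$ is a Coxeter system with length function $\ell$, reflections $T=\{wsw^{-1}:w\in W,\ s\in S\}$ and Bruhat order $\leqslant$. For $k\in\mathbb N$, let $T_k=\{t\in T:(\ell(t)-1)/2\leqslant k\}$. Define $u\leqslant_{L^k}v$ iff $u=v$, or $\ell(u)<\ell(v)$ and there exist $t_1,\dots,t_r\in T_k$ with $u<t_1u<\dots<t_r\cdots t_1u=v$ in the Bruhat order. For $J\subseteq S$, $W^J=\{w\in W:\ell(w)<\ell(ws)\ \forall s\in J\}$. Every $w$ factors uniquely as $w=w^Jw_J$ with $w^J\in W^J$, $w_J\in W_J$ (the subgroup generated by $J$) and $\ell(w)=\ell(w^J)+\ell(w_J)$. Set $P^J(w):=w^J$. *)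

theory Defs
  imports "HOL-Combinatorics.Combinatorics"
begin

text \<open>The symmetric group S_n as permutations of {0..<n}; the Coxeter generator
  s_{i+1} of the paper is the adjacent transposition (i, i+1), for i+1 < n.\<close>

definition Sn :: "nat \<Rightarrow> (nat \<Rightarrow> nat) set" where
  "Sn n = {p. p permutes {..<n}}"

definition sgen :: "nat \<Rightarrow> nat \<Rightarrow> nat" where
  "sgen i = transpose i (Suc i)"

definition gens :: "nat \<Rightarrow> (nat \<Rightarrow> nat) set" where
  "gens n = {sgen i | i. Suc i < n}"

definition word_prod :: "(nat \<Rightarrow> nat) list \<Rightarrow> nat \<Rightarrow> nat" where
  "word_prod xs = foldr (\<circ>) xs id"

definition clen :: "nat \<Rightarrow> (nat \<Rightarrow> nat) \<Rightarrow> nat" where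
  "clen n w = (LEAST m. \<exists>xs. set xs \<subseteq> gens n \<and> length xs = m \<and> word_prod xs = w)"

definition refls :: "nat \<Rightarrow> (nat \<Rightarrow> nat) set" where
  "refls n = {w \<circ> s \<circ> inv w | w s. w \<in> Sn n \<and> s \<in> gens n}"

definition bruhat_le :: "nat \<Rightarrow> (nat \<Rightarrow> nat) \<Rightarrow> (nat \<Rightarrow> nat) \<Rightarrow> bool" where
  "bruhat_le n u v \<longleftrightarrow> u \<in> Sn n \<and> v \<in> Sn n \<and>
     (\<lambda>x y. \<exists>t\<in>refls n. y = t \<circ> x \<and> clen n x < clen n y)\<^sup>*\<^sup>* u v"

definition bruhat_less :: "nat \<Rightarrow> (nat \<Rightarrow> nat) \<Rightarrow> (nat \<Rightarrow> nat) \<Rightarrow> bool" where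
  "bruhat_less n u v \<longleftrightarrow> bruhat_le n u v \<and> u \<noteq> v"

definition Tk :: "nat \<Rightarrow> nat \<Rightarrow> (nat \<Rightarrow> nat) set" where
  "Tk n k = {t \<in> refls n. (real (clen n t) - 1) / 2 \<le> real k}"

inductive lchain :: "nat \<Rightarrow> nat \<Rightarrow> (nat \<Rightarrow> nat) \<Rightarrow> (nat \<Rightarrow> nat) \<Rightarrow> bool"
  for n k where
  base: "lchain n k u u"
| step: "t \<in> Tk n k \<Longrightarrow> bruhat_less n u (t \<circ> u) \<Longrightarrow> lchain n k (t \<circ> u) v \<Longrightarrow> lchain n k u v"

definition lek :: "nat \<Rightarrow> nat \<Rightarrow> (nat \<Rightarrow> nat) \<Rightarrow> (nat \<Rightarrow> nat) \<Rightarrow> bool" where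
  "lek n k u v \<longleftrightarrow> u \<in> Sn n \<and> v \<in> Sn n \<and>
     (u = v \<or> (clen n u < clen n v \<and> lchain n k u v))"

definition WJ :: "nat \<Rightarrow> (nat \<Rightarrow> nat) set \<Rightarrow> (nat \<Rightarrow> nat) set" where
  "WJ n J = {word_prod xs | xs. set xs \<subseteq> J}"

definition WupJ :: "nat \<Rightarrow> (nat \<Rightarrow> nat) set \<Rightarrow> (nat \<Rightarrow> nat) set" where
  "WupJ n J = {w \<in> Sn n. \<forall>s\<in>J. clen n w < clen n (w \<circ> s)}"

definition PJ :: "nat \<Rightarrow> (nat \<Rightarrow> nat) set \<Rightarrow> (nat \<Rightarrow> nat) \<Rightarrow> nat \<Rightarrow> nat" where
  "PJ n J w = (THE u. u \<in> WupJ n J \<and>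
      (\<exists>v\<in>WJ n J. w = u \<circ> v \<and> clen n w = clen n u + clen n v))"

definition phi :: "nat \<Rightarrow> (nat \<Rightarrow> nat) \<Rightarrow> (nat \<Rightarrow> nat) list" where
  "phi n w = map (\<lambda>i. PJ n (gens n - {sgen i}) w) [0..<n-1]"

end

theory Submission
  imports Defs
begin

text \<open>By Ehresmann's tableau criterion, \<open>u \<le> v\<close> in the Bruhat order of \<open>S\<^sub>n\<close> iff for every \<open>i\<close> the
  set \<open>u{0..i}\<close> is dominated by \<open>v{0..i}\<close>, i.e. has at most as many elements \<open>\<ge> c\<close> for every \<open>c\<close>.
  The projection of \<open>w\<close> to the maximal parabolic quotient omitting \<open>s\<^sub>i\<^sub>+\<^sub>1\<close> is the Grassmannian
  permutation listing \<open>w{0..i}\<close> increasingly followed by the rest, so it remembers exactly the set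
  \<open>w{0..i}\<close>; hence \<open>\<phi>\<^sub>k\<close> is injective, and the \<open>i\<close>-th dominance condition is the Bruhat order
  between the \<open>i\<close>-th projections. Finally, between two Grassmannian permutations with dominated
  sets one can move by left multiplication with simple reflections \<open>s\<^sub>j\<close> (replacing some \<open>j\<close> by
  \<open>j + 1\<close> in the set), each raising the length by one; since simple reflections lie in every
  \<open>T\<^sub>k\<close>, the orders \<open>\<le>\<^sub>L\<^sub>k\<close> and Bruhat coincide on these quotients, and \<open>\<phi>\<^sub>k\<close> itself is the
  isomorphism.\<close>

lemma strict_mono_on_image_eq:
  fixes f g :: "nat \<Rightarrow> 'a::linorder"
  assumes f: "strict_mono_on {a..<b} f" and g: "strict_mono_on {a..<b} g"
    and img: "f ` {a..<b} = g ` {a..<b}" and x: "x \<in> {a..<b}"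
  shows "f x = g x"
proof -
  have sorted: "sorted_wrt (<) (map h [a..<b])" if "strict_mono_on {a..<b} h" for h :: "nat \<Rightarrow> 'a"
    unfolding sorted_wrt_map
    by (rule sorted_wrt_mono_rel[OF _ sorted_wrt_upt]) (use that in \<open>auto intro: strict_mono_onD\<close>)
  have "map f [a..<b] = map g [a..<b]"
    using sorted[OF f] sorted[OF g] img by (intro sorted_distinct_set_unique) (auto simp: strict_sorted_iff)
  then show ?thesis using x by simp
qed

lemma strict_mono_on_atLeastLessThan_SucI:
  fixes f :: "nat \<Rightarrow> 'a::order"
  assumes "\<And>x. a \<le> x \<Longrightarrow> Suc x < b \<Longrightarrow> f x < f (Suc x)"
  shows "strict_mono_on {a..<b} f"
proof (rule strict_mono_onI)
  fix x y assume "x \<in> {a..<b}" "y \<in> {a..<b}" "x < y"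
  then show "f x < f y"
  proof (induction y)
    case (Suc y)
    then show ?case using assms[of y] by (cases "x = y") auto
  qed simp
qed

lemma permutes_lessThan_apply: "w permutes {..<n} \<Longrightarrow> x < n \<Longrightarrow> w x < n"
  by (metis lessThan_iff permutes_in_image)

lemma permutes_lessThan_inv_apply: "w permutes {..<n} \<Longrightarrow> x < n \<Longrightarrow> inv w x < n"
  by (metis lessThan_iff permutes_in_image permutes_inverses(1))

lemma permutes_apply_Suc_neq: "w permutes S \<Longrightarrow> w j \<noteq> w (Suc j)"
  by (metis injD n_not_Suc_n permutes_inj)

lemma permutes_ascending_eq_id:
  assumes w: "w permutes {..<n}" and asc: "\<And>x. Suc x < n \<Longrightarrow> w x < w (Suc x)"
  shows "w = id"
proof
  fix x
  show "w x = id x"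
  proof (cases "x < n")
    case True
    have "strict_mono_on {0..<n} w" by (rule strict_mono_on_atLeastLessThan_SucI) (use asc in auto)
    then show ?thesis
      using True permutes_image[OF w] strict_mono_on_image_eq[of 0 n w id x]
      by (simp add: lessThan_atLeast0 strict_mono_on_id)
  next
    case False then show ?thesis using permutes_not_in[OF w] by simp
  qed
qed

lemma permutes_image_atMost_eq:
  assumes v: "v permutes {..<(n::nat)}" and sub: "v ` {..i} \<subseteq> {..i}"
  shows "v ` {..i} = {..i}"
proof -
  have "card (v ` {..i}) = card {..i}" using permutes_inj[OF v] by (simp add: card_image inj_on_subset)
  then show ?thesis using sub by (metis card_subset_eq finite_atMost)
qed

lemma permutes_eq_of_initial_images:
  assumes u: "u permutes {..<n}" and v: "v permutes {..<n}"
    and img: "\<And>i. Suc i < n \<Longrightarrow> u ` {..i} = v ` {..i}"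
  shows "u = v"
proof
  fix x
  have all: "u ` {..i} = v ` {..i}" if "i < n" for i
  proof (cases "Suc i < n")
    case False
    then have "{..i} = {..<n}" using that by auto
    then show ?thesis using permutes_image[OF u] permutes_image[OF v] by simp
  qed (rule img)
  show "u x = v x"
  proof (cases "x < n")
    case True
    have below: "u ` {..<x} = v ` {..<x}"
      using all[of "x - 1"] True by (cases x) (auto simp: lessThan_Suc_atMost[symmetric])
    have "{..x} = insert x {..<x}" by auto
    then have "insert (u x) (u ` {..<x}) = insert (v x) (v ` {..<x})" using all[OF True] by simp
    moreover have "u x \<notin> u ` {..<x}" "v x \<notin> v ` {..<x}"
      using permutes_inj[OF u] permutes_inj[OF v] by (auto dest: injD)
    ultimately show ?thesis using below by blast
  next
    case False then show ?thesis using permutes_not_in[OF u] permutes_not_in[OF v] by simp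
  qed
qed

lemma sgen_apply: "sgen j x = (if x = j then Suc j else if x = Suc j then j else x)"
  by (simp add: sgen_def transpose_def)

lemma sgen_permutes: "Suc j < n \<Longrightarrow> sgen j permutes {..<n}"
  unfolding sgen_def by (rule permutes_swap_id) auto

lemma sgen_comp_sgen: "sgen j \<circ> sgen j = id"
  by (simp add: sgen_def)

lemma sgen_less_sgen_iff:
  "x \<noteq> y \<Longrightarrow> \<not> (x = j \<and> y = Suc j) \<Longrightarrow> \<not> (x = Suc j \<and> y = j) \<Longrightarrow> sgen j x < sgen j y \<longleftrightarrow> x < y"
  by (auto simp: sgen_apply)

lemma sgen_image_atMost: "j \<noteq> i \<Longrightarrow> sgen j ` {..i} = {..i}"
  unfolding sgen_def by (rule transpose_image_eq) auto

lemma sgen_inj: "sgen j = sgen i \<Longrightarrow> j = i"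
  by (drule fun_cong[of _ _ j]) (auto simp: sgen_apply split: if_splits)

lemma gens_iff: "s \<in> gens n \<longleftrightarrow> (\<exists>j. s = sgen j \<and> Suc j < n)"
  by (auto simp: gens_def)

lemma gens_remove_iff: "s \<in> gens n - {sgen i} \<longleftrightarrow> (\<exists>j. s = sgen j \<and> Suc j < n \<and> j \<noteq> i)"
  unfolding gens_def by (auto dest: sgen_inj)

lemma word_prod_Nil: "word_prod [] = id"
  by (simp add: word_prod_def)

lemma word_prod_Cons: "word_prod (x # xs) = x \<circ> word_prod xs"
  by (simp add: word_prod_def)

lemma word_prod_permutes: "set xs \<subseteq> gens n \<Longrightarrow> word_prod xs permutes {..<n}"
  by (induction xs) (auto simp: word_prod_Nil word_prod_Cons gens_iff intro!: permutes_compose sgen_permutes)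

definition inversions :: "nat \<Rightarrow> (nat \<Rightarrow> nat) \<Rightarrow> (nat \<times> nat) set" where
  "inversions n w = {(r, s). r < s \<and> s < n \<and> w s < w r}"

definition ninversions :: "nat \<Rightarrow> (nat \<Rightarrow> nat) \<Rightarrow> nat" where
  "ninversions n w = card (inversions n w)"

lemma finite_inversions: "finite (inversions n w)"
  by (rule finite_subset[of _ "{..<n} \<times> {..<n}"]) (auto simp: inversions_def)

lemma ninversions_id: "ninversions n id = 0"
proof -
  have "inversions n id = {}" by (auto simp: inversions_def)
  then show ?thesis by (simp add: ninversions_def)
qed

lemma inversions_sgen_comp:
  assumes w: "w permutes {..<n}" and pq: "p < q" "q < n" and wp: "w p = j" and wq: "w q = Suc j"
  shows "inversions n (sgen j \<circ> w) = insert (p, q) (inversions n w)" "(p, q) \<notin> inversions n w"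
proof -
  have inj: "inj w" using w by (rule permutes_inj)
  show "(p, q) \<notin> inversions n w" using wp wq by (auto simp: inversions_def)
  show "inversions n (sgen j \<circ> w) = insert (p, q) (inversions n w)"
  proof (rule set_eqI, clarify)
    fix r s
    show "(r, s) \<in> inversions n (sgen j \<circ> w) \<longleftrightarrow> (r, s) \<in> insert (p, q) (inversions n w)"
    proof (cases "(r, s) = (p, q) \<or> \<not> r < s")
      case True then show ?thesis using pq wp wq by (auto simp: inversions_def sgen_apply)
    next
      case False
      have "w s \<noteq> w r" using inj False by (metis less_irrefl injD)
      moreover have "\<not> (w s = j \<and> w r = Suc j)" using False pq inj wp wq by (metis injD less_asym)
      moreover have "\<not> (w s = Suc j \<and> w r = j)" using False inj wp wq by (metis injD)
      ultimately have "sgen j (w s) < sgen j (w r) \<longleftrightarrow> w s < w r"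
        by (rule sgen_less_sgen_iff)
      then show ?thesis using False by (auto simp: inversions_def)
    qed
  qed
qed

lemma ninversions_sgen_comp:
  assumes "w permutes {..<n}" "p < q" "q < n" "w p = j" "w q = Suc j"
  shows "ninversions n (sgen j \<circ> w) = Suc (ninversions n w)"
  using inversions_sgen_comp[OF assms] finite_inversions by (simp add: ninversions_def)

lemma ninversions_sgen_comp_left_descent:
  assumes v: "v permutes {..<n}" and j: "Suc j < n" and desc: "inv v (Suc j) < inv v j"
  shows "ninversions n v = Suc (ninversions n (sgen j \<circ> v))"
proof -
  have v': "sgen j \<circ> v permutes {..<n}" by (rule permutes_compose[OF v sgen_permutes[OF j]])
  have "ninversions n (sgen j \<circ> (sgen j \<circ> v)) = Suc (ninversions n (sgen j \<circ> v))"
    by (rule ninversions_sgen_comp[OF v' desc permutes_lessThan_inv_apply[OF v]])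
       (use j in \<open>auto simp: permutes_inverses[OF v] sgen_apply\<close>)
  then show ?thesis by (simp add: o_assoc sgen_comp_sgen)
qed

lemma ninversions_sgen_comp_cases:
  assumes w: "w permutes {..<n}" and j: "Suc j < n"
  shows "ninversions n (sgen j \<circ> w) = Suc (ninversions n w) \<or>
         ninversions n w = Suc (ninversions n (sgen j \<circ> w))"
proof -
  have p: "inv w j < n" "w (inv w j) = j" and q: "inv w (Suc j) < n" "w (inv w (Suc j)) = Suc j"
    using j permutes_lessThan_inv_apply[OF w] permutes_inverses[OF w] by auto
  then have "inv w j \<noteq> inv w (Suc j)" by auto
  then consider "inv w j < inv w (Suc j)" | "inv w (Suc j) < inv w j" by linarith
  then show ?thesis
    using ninversions_sgen_comp[OF w _ q(1) p(2) q(2)] ninversions_sgen_comp_left_descent[OF w j]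
    by cases auto
qed

lemma ninversions_word_prod_le: "set xs \<subseteq> gens n \<Longrightarrow> ninversions n (word_prod xs) \<le> length xs"
proof (induction xs)
  case Nil then show ?case by (simp only: word_prod_Nil ninversions_id)
next
  case (Cons x xs)
  then obtain j where x: "x = sgen j" "Suc j < n" by (auto simp: gens_iff)
  have "word_prod xs permutes {..<n}" using Cons by (intro word_prod_permutes) auto
  then have "ninversions n (sgen j \<circ> word_prod xs) \<le> Suc (ninversions n (word_prod xs))"
    using ninversions_sgen_comp_cases[OF _ x(2)] by fastforce
  moreover have "ninversions n (word_prod xs) \<le> length xs" using Cons by simp
  ultimately show ?case unfolding word_prod_Cons x length_Cons by linarith
qed

text \<open>Right multiplication by a transposition of a non-inversion \<open>(p, q)\<close>: the map \<open>h\<close> fixes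
  pairs with an end strictly between \<open>p\<close> and \<open>q\<close> and swaps the others through \<open>p \<leftrightarrow> q\<close>; it
  injects the old inversions into the new ones, missing the new inversion \<open>(p, q)\<close>.\<close>
lemma ninversions_less_comp_transpose:
  assumes w: "w permutes {..<n}" and pq: "p < q" "q < n" and wpq: "w p < w q"
  shows "ninversions n w < ninversions n (w \<circ> transpose p q)"
proof -
  let ?t = "transpose p q"
  let ?w' = "w \<circ> ?t"
  define h where "h = (\<lambda>(r::nat, s::nat).
    if (p < r \<and> r < q) \<or> (p < s \<and> s < q) then (r, s) else (?t r, ?t s))"
  have "h (r, s) \<in> inversions n ?w' - {(p, q)}" if "(r, s) \<in> inversions n w" for r s
  proof -
    have rs: "r < s" "s < n" "w s < w r" using that by (auto simp: inversions_def)
    show ?thesis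
    proof (cases "(p < r \<and> r < q) \<or> (p < s \<and> s < q)")
      case True
      then show ?thesis using rs pq wpq by (auto simp: h_def inversions_def transpose_def)
    next
      case False
      then have "h (r, s) = (?t r, ?t s)" by (auto simp: h_def)
      moreover have "(?t r, ?t s) \<in> inversions n ?w'"
        using False rs pq wpq by (auto simp: inversions_def transpose_def)
      moreover have "(?t r, ?t s) \<noteq> (p, q)"
        using False rs pq wpq by (auto simp: transpose_def)
      ultimately show ?thesis by simp
    qed
  qed
  then have img: "h ` inversions n w \<subseteq> inversions n ?w' - {(p, q)}"
    by (intro image_subsetI) (metis surj_pair)
  have "inj_on h (inversions n w)"
    using pq unfolding h_def by (auto intro!: inj_onI simp: transpose_def split: if_splits)
  then have "ninversions n w = card (h ` inversions n w)" by (simp add: ninversions_def card_image)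
  also have "\<dots> \<le> card (inversions n ?w' - {(p, q)})"
    by (rule card_mono[OF _ img]) (simp add: finite_inversions)
  also have "\<dots> < card (inversions n ?w')"
    using pq wpq finite_inversions by (intro card_Diff1_less) (auto simp: inversions_def)
  finally show ?thesis by (simp add: ninversions_def)
qed

section \<open>Coxeter length as the number of inversions\<close>

lemma exists_left_descent:
  assumes v: "v permutes {..<n}" and "v \<noteq> id"
  obtains j where "Suc j < n" "inv v (Suc j) < inv v j"
proof -
  have w: "inv v permutes {..<n}" by (rule permutes_inv[OF v])
  have "inv v \<noteq> id" using \<open>v \<noteq> id\<close> permutes_inv_inv[OF v] by fastforce
  then obtain j where "Suc j < n" "\<not> inv v j < inv v (Suc j)"
    using permutes_ascending_eq_id[OF w] by blast
  then show ?thesis using that permutes_apply_Suc_neq[OF w, of j] by simp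
qed

lemma left_descent_not_stabilises:
  assumes v: "v permutes {..<n}" and desc: "inv v (Suc j) < inv v j"
  shows "\<not> v ` {..j} \<subseteq> {..j}"
proof
  assume "v ` {..j} \<subseteq> {..j}"
  then have eq: "v ` {..j} = {..j}" by (rule permutes_image_atMost_eq[OF v])
  then have "inv v j \<le> j"
    using permutes_inverses(2)[OF v] by (metis atMost_iff imageE order_refl)
  moreover have "\<not> inv v (Suc j) \<le> j"
  proof
    assume "inv v (Suc j) \<le> j"
    then have "v (inv v (Suc j)) \<le> j" using eq by auto
    then show False by (simp add: permutes_inverses[OF v])
  qed
  ultimately show False using desc by simp
qed

text \<open>Induction on the number of inversions, peeling off a left descent \<open>s\<^sub>j\<close>; a \<open>v\<close> that
  stabilises \<open>{..i}\<close> has no left descent \<open>s\<^sub>i\<close>, so the word avoids \<open>s\<^sub>i\<close>.\<close>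
lemma reduced_word_exists:
  "v permutes {..<n} \<Longrightarrow> (\<forall>i\<in>I. v ` {..i} \<subseteq> {..i}) \<Longrightarrow>
   \<exists>xs. length xs = ninversions n v \<and> set xs \<subseteq> {sgen j | j. Suc j < n \<and> j \<notin> I} \<and> word_prod xs = v"
proof (induction "ninversions n v" arbitrary: v rule: less_induct)
  case less
  note v = less.prems(1) and stab = less.prems(2)
  show ?case
  proof (cases "v = id")
    case True
    then show ?thesis by (intro exI[of _ "[]"]) (simp add: ninversions_id word_prod_Nil)
  next
    case False
    then obtain j where j: "Suc j < n" "inv v (Suc j) < inv v j" by (rule exists_left_descent[OF v])
    define v' where "v' = sgen j \<circ> v"
    have v': "v' permutes {..<n}" unfolding v'_def by (rule permutes_compose[OF v sgen_permutes[OF j(1)]])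
    have v'v: "sgen j \<circ> v' = v" by (simp add: v'_def o_assoc sgen_comp_sgen)
    have lt: "ninversions n v = Suc (ninversions n v')"
      unfolding v'_def by (rule ninversions_sgen_comp_left_descent[OF v j])
    have jI: "j \<notin> I" using left_descent_not_stabilises[OF v j(2)] stab by blast
    have "v' ` {..i} \<subseteq> {..i}" if i: "i \<in> I" for i
    proof -
      have "v' ` {..i} = sgen j ` (v ` {..i})" by (simp add: v'_def image_comp)
      also have "\<dots> \<subseteq> sgen j ` {..i}" using stab i by (intro image_mono) auto
      also have "\<dots> = {..i}" using i jI by (intro sgen_image_atMost) auto
      finally show ?thesis .
    qed
    then obtain xs where xs: "length xs = ninversions n v'"
        "set xs \<subseteq> {sgen j | j. Suc j < n \<and> j \<notin> I}" "word_prod xs = v'"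
      using less.hyps[of v'] lt v' by auto
    show ?thesis
      using xs j jI lt v'v by (intro exI[of _ "sgen j # xs"]) (auto simp: word_prod_Cons)
  qed
qed

lemma clen_eq_ninversions:
  assumes w: "w permutes {..<n}" shows "clen n w = ninversions n w"
  unfolding clen_def
proof (rule Least_equality)
  obtain xs where "length xs = ninversions n w" "set xs \<subseteq> {sgen j | j. Suc j < n}" "word_prod xs = w"
    using reduced_word_exists[OF w, of "{}"] by auto
  then show "\<exists>xs. set xs \<subseteq> gens n \<and> length xs = ninversions n w \<and> word_prod xs = w"
    by (auto simp: gens_def)
qed (use ninversions_word_prod_le in blast)

lemma clen_less_comp_sgen_iff:
  assumes w: "w permutes {..<n}" and j: "Suc j < n"
  shows "clen n w < clen n (w \<circ> sgen j) \<longleftrightarrow> w j < w (Suc j)"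
proof -
  have w': "w \<circ> sgen j permutes {..<n}" by (rule permutes_compose[OF sgen_permutes[OF j] w])
  show ?thesis
  proof
    assume "w j < w (Suc j)"
    then have "ninversions n w < ninversions n (w \<circ> sgen j)"
      using ninversions_less_comp_transpose[OF w _ j, of j] by (simp add: sgen_def)
    then show "clen n w < clen n (w \<circ> sgen j)" by (simp add: clen_eq_ninversions w w')
  next
    assume a: "clen n w < clen n (w \<circ> sgen j)"
    show "w j < w (Suc j)"
    proof (rule ccontr)
      assume "\<not> w j < w (Suc j)"
      then have "(w \<circ> sgen j) j < (w \<circ> sgen j) (Suc j)"
        using permutes_apply_Suc_neq[OF w, of j] by (simp add: sgen_apply)
      then have "ninversions n (w \<circ> sgen j) < ninversions n (w \<circ> sgen j \<circ> transpose j (Suc j))"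
        using ninversions_less_comp_transpose[OF w' _ j] by simp
      moreover have "w \<circ> sgen j \<circ> transpose j (Suc j) = w" by (simp add: o_assoc[symmetric] sgen_def)
      ultimately show False
        using a by (simp add: clen_eq_ninversions[OF w] clen_eq_ninversions[OF w'])
    qed
  qed
qed

lemma comp_transpose_comp_inv:
  assumes "bij w" shows "w \<circ> transpose x y \<circ> inv w = transpose (w x) (w y)"
proof -
  have "transpose (w x) (w y) \<circ> w = w \<circ> transpose x y"
    using transpose_comp_eq[OF assms, of "w x" "w y"] by (simp add: bij_is_inj[OF assms])
  then have "transpose (w x) (w y) \<circ> w \<circ> inv w = w \<circ> transpose x y \<circ> inv w" by simp
  moreover have "w \<circ> inv w = id" using bij_is_surj[OF assms] by (simp add: surj_iff)
  ultimately show ?thesis by (simp add: o_assoc[symmetric])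
qed

lemma refls_eq: "refls n = {transpose a b | a b. a < b \<and> b < n}"
proof (intro equalityI subsetI)
  fix t assume "t \<in> refls n"
  then obtain w j where w: "w permutes {..<n}" and j: "Suc j < n" and t: "t = w \<circ> sgen j \<circ> inv w"
    by (auto simp: refls_def Sn_def gens_def)
  have t': "t = transpose (w j) (w (Suc j))"
    using comp_transpose_comp_inv[OF permutes_bij[OF w]] t by (simp add: sgen_def)
  have bound: "w j < n" "w (Suc j) < n" using j permutes_lessThan_apply[OF w] by auto
  consider "w j < w (Suc j)" | "w (Suc j) < w j" using permutes_apply_Suc_neq[OF w, of j] by arith
  then show "t \<in> {transpose a b | a b. a < b \<and> b < n}"
  proof cases
    case 1 then show ?thesis using t' bound by blast
  next
    case 2 then show ?thesis using t' bound transpose_commute[of "w j"] by blast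
  qed
next
  fix t assume "t \<in> {transpose a b | a b. a < b \<and> b < n}"
  then obtain a b where ab: "a < b" "b < n" and t: "t = transpose a b" by blast
  define w where "w = transpose (Suc a) b"
  have w: "w permutes {..<n}" unfolding w_def using ab by (intro permutes_swap_id) auto
  have "w \<circ> sgen a \<circ> inv w = transpose (w a) (w (Suc a))"
    using comp_transpose_comp_inv[OF permutes_bij[OF w]] by (simp add: sgen_def)
  also have "\<dots> = t" using ab by (simp add: w_def t)
  finally have "t = w \<circ> sgen a \<circ> inv w" ..
  moreover have "sgen a \<in> gens n" using ab by (auto simp: gens_def)
  ultimately show "t \<in> refls n"
    using w unfolding refls_def Sn_def by (metis (mono_tags, lifting) mem_Collect_eq)
qed

lemma transpose_in_refls: "a < b \<Longrightarrow> b < n \<Longrightarrow> transpose a b \<in> refls n"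
  by (auto simp: refls_eq)

lemma sgen_in_Tk: "Suc j < n \<Longrightarrow> sgen j \<in> Tk n k"
  using ninversions_sgen_comp[of id n j "Suc j" j]
  by (simp add: Tk_def sgen_def transpose_in_refls clen_eq_ninversions permutes_swap_id ninversions_id)

section \<open>The tableau criterion for the Bruhat order\<close>

text \<open>Comparing these counts for all \<open>i, c\<close> is Ehresmann's tableau criterion.\<close>
definition rank_ge :: "nat \<Rightarrow> (nat \<Rightarrow> nat) \<Rightarrow> nat \<Rightarrow> nat \<Rightarrow> nat" where
  "rank_ge n w i c = card {r. r \<le> i \<and> r < n \<and> c \<le> w r}"

definition tableau_le :: "nat \<Rightarrow> (nat \<Rightarrow> nat) \<Rightarrow> (nat \<Rightarrow> nat) \<Rightarrow> bool" where
  "tableau_le n u v \<longleftrightarrow> (\<forall>i c. rank_ge n u i c \<le> rank_ge n v i c)"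

lemma finite_initial_positions: "finite {r::nat. r \<le> i \<and> r < n \<and> P r}"
  by (rule finite_subset[of _ "{..<n}"]) auto

lemma rank_ge_comp_transpose:
  assumes x: "x permutes {..<n}" and pq: "p < q" "q < n" and xpq: "x p < x q"
  shows "rank_ge n (x \<circ> transpose p q) i c =
     rank_ge n x i c + (if p \<le> i \<and> i < q \<and> x p < c \<and> c \<le> x q then 1 else 0)"
proof -
  let ?t = "transpose p q"
  define S where "S = {r. r \<le> i \<and> r < n \<and> c \<le> x r}"
  define S' where "S' = {r. r \<le> i \<and> r < n \<and> c \<le> x (?t r)}"
  have rank: "rank_ge n x i c = card S" "rank_ge n (x \<circ> ?t) i c = card S'"
    by (simp_all add: rank_ge_def S_def S'_def)
  consider "i < p" | "q \<le> i" | "p \<le> i" "i < q" by linarith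
  then show ?thesis
  proof cases
    case 1
    then have "S' = S" unfolding S_def S'_def using pq by (auto simp: transpose_def)
    then show ?thesis using rank 1 by simp
  next
    case 2
    have "S' = ?t ` S"
      unfolding S_def S'_def using 2 pq in_transpose_image_iff
      by (auto simp: transpose_def)
    then show ?thesis using rank 2 by (simp add: card_image)
  next
    case 3
    have S': "S' = (S - {p}) \<union> (if c \<le> x q then {p} else {})"
      unfolding S_def S'_def using 3 pq by (auto simp: transpose_def)
    have "p \<in> S \<longleftrightarrow> c \<le> x p" unfolding S_def using 3 pq by auto
    moreover have "finite S" unfolding S_def by (rule finite_initial_positions)
    ultimately show ?thesis using rank 3 S' xpq by (auto simp: card_insert_if)
  qed
qed

text \<open>A Bruhat step \<open>x \<rightarrow> (a b) x\<close> raises the length exactly when the positions of \<open>a < b\<close> in \<open>x\<close>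
  appear in increasing order, and then it can only increase the counts.\<close>
lemma rank_ge_le_reflection_comp:
  assumes x: "x permutes {..<n}" and t: "t \<in> refls n" and l: "clen n x < clen n (t \<circ> x)"
  shows "rank_ge n x i c \<le> rank_ge n (t \<circ> x) i c"
proof -
  obtain a b where ab: "a < b" "b < n" and t: "t = transpose a b" using t by (auto simp: refls_eq)
  let ?p = "inv x a" and ?q = "inv x b"
  have pq: "?p < n" "?q < n" "x ?p = a" "x ?q = b"
    using ab permutes_lessThan_inv_apply[OF x] permutes_inverses[OF x] by auto
  have teq: "t \<circ> x = x \<circ> transpose ?p ?q"
    using t transpose_comp_eq[OF permutes_bij[OF x]] by simp
  have tx: "t \<circ> x permutes {..<n}"
    unfolding t using ab by (intro permutes_compose[OF x] permutes_swap_id) auto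
  have lt: "ninversions n x < ninversions n (t \<circ> x)"
    using l clen_eq_ninversions[OF x] clen_eq_ninversions[OF tx] by simp
  have "\<not> ?q < ?p"
  proof
    assume qp: "?q < ?p"
    let ?y = "x \<circ> transpose ?p ?q"
    have "ninversions n ?y < ninversions n (?y \<circ> transpose ?q ?p)"
      using ninversions_less_comp_transpose[OF _ qp pq(1), of ?y] tx teq pq ab by simp
    moreover have "?y \<circ> transpose ?q ?p = x"
      by (simp add: o_assoc[symmetric] transpose_commute[of "inv x b"])
    ultimately show False using lt teq by simp
  qed
  moreover have "?p \<noteq> ?q" using pq ab by auto
  ultimately have "?p < ?q" by simp
  then show ?thesis using rank_ge_comp_transpose[OF x \<open>?p < ?q\<close> pq(2)] pq ab teq by simp
qed

lemma bruhat_le_imp_tableau_le: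
  assumes "bruhat_le n u v" shows "tableau_le n u v"
proof -
  have "(\<lambda>x y. \<exists>t\<in>refls n. y = t \<circ> x \<and> clen n x < clen n y)\<^sup>*\<^sup>* u v" "u permutes {..<n}"
    using assms by (auto simp: bruhat_le_def Sn_def)
  then have "v permutes {..<n} \<and> tableau_le n u v"
  proof (induction rule: rtranclp_induct)
    case (step y z)
    then obtain t where t: "t \<in> refls n" "z = t \<circ> y" "clen n y < clen n z" by blast
    have "z permutes {..<n}"
      using t step by (auto simp: refls_eq intro!: permutes_compose permutes_swap_id)
    then show ?case
      using step rank_ge_le_reflection_comp[OF _ t(1)] t unfolding tableau_le_def
      by (meson order_trans)
  qed (simp add: tableau_le_def)
  then show ?thesis ..
qed

text \<open>The entry \<open>v p\<close> is counted for \<open>v\<close>, but the gap hypothesis leaves \<open>u\<close> nothing to match it.\<close>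
lemma rank_ge_less_beyond_first_difference:
  assumes u: "u permutes {..<n}" and v: "v permutes {..<n}" and tab: "tableau_le n u v"
    and p: "p < n" and pre: "\<And>r. r < p \<Longrightarrow> u r = v r"
    and c: "u p < c" "c \<le> v p" and i: "p \<le> i"
    and gap: "\<And>r. p < r \<Longrightarrow> r \<le> i \<Longrightarrow> r < n \<Longrightarrow> \<not> (u p < u r \<and> u r \<le> v p)"
  shows "rank_ge n u i c < rank_ge n v i c"
proof -
  define Su where "Su = (\<lambda>d. {r. r \<le> i \<and> r < n \<and> d \<le> u r})"
  define Sv where "Sv = (\<lambda>d. {r. r \<le> i \<and> r < n \<and> d \<le> v r})"
  define M where "M = {r. r < p \<and> c \<le> u r \<and> u r \<le> v p}"
  have fin: "finite (Su d)" "finite (Sv d)" for d unfolding Su_def Sv_def by (rule finite_initial_positions)+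
  have fM: "finite M" unfolding M_def by auto
  have s1: "Su c \<subseteq> Su (Suc (v p)) \<union> M"
  proof
    fix r assume r: "r \<in> Su c"
    then have r': "r \<le> i" "r < n" "c \<le> u r" by (auto simp: Su_def)
    show "r \<in> Su (Suc (v p)) \<union> M"
    proof (cases "r < p")
      case True then show ?thesis using r' p i by (auto simp: M_def Su_def)
    next
      case False
      then have "p < r" using r' c by (cases "r = p") auto
      then have "v p < u r" using gap r' c by fastforce
      then show ?thesis using r' by (auto simp: Su_def)
    qed
  qed
  have s2: "Sv (Suc (v p)) \<union> M \<union> {p} \<subseteq> Sv c"
    using i p pre c unfolding Sv_def M_def by auto
  have "rank_ge n u i c = card (Su c)" by (simp add: rank_ge_def Su_def)
  also have "\<dots> \<le> card (Su (Suc (v p)) \<union> M)" by (rule card_mono) (use s1 fin fM in auto)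
  also have "\<dots> \<le> card (Su (Suc (v p))) + card M" by (rule card_Un_le)
  also have "card (Su (Suc (v p))) \<le> card (Sv (Suc (v p)))"
    using tab unfolding tableau_le_def rank_ge_def Su_def Sv_def by blast
  also have "card (Sv (Suc (v p))) + card M < card (Sv (Suc (v p)) \<union> M \<union> {p})"
  proof -
    have "Sv (Suc (v p)) \<inter> M = {}" using pre unfolding Sv_def M_def by force
    moreover have "p \<notin> Sv (Suc (v p)) \<union> M" unfolding Sv_def M_def by auto
    ultimately show ?thesis using fin fM by (simp add: card_Un_disjoint)
  qed
  also have "\<dots> \<le> card (Sv c)" by (rule card_mono[OF fin(2) s2])
  also have "\<dots> = rank_ge n v i c" by (simp add: rank_ge_def Sv_def)
  finally show ?thesis by simp
qed

lemma tableau_le_first_difference_less: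
  assumes tab: "tableau_le n u v" and p: "p < n" "u p \<noteq> v p" and pre: "\<And>r. r < p \<Longrightarrow> u r = v r"
  shows "u p < v p"
proof (rule ccontr)
  assume "\<not> u p < v p"
  then have vu: "v p < u p" using p by simp
  define Su where "Su = {r. r \<le> p \<and> r < n \<and> u p \<le> u r}"
  define Sv where "Sv = {r. r \<le> p \<and> r < n \<and> u p \<le> v r}"
  have "Sv \<subseteq> Su - {p}" using pre vu unfolding Su_def Sv_def by (auto simp: le_less)
  moreover have "p \<in> Su" "finite Su" using p unfolding Su_def by (auto intro: finite_initial_positions)
  ultimately have "card Sv < card Su" by (meson card_Diff1_less card_mono finite_Diff le_less_trans)
  moreover have "card Su \<le> card Sv"
    using tab unfolding tableau_le_def rank_ge_def Su_def Sv_def by blast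
  ultimately show False by simp
qed

lemma tableau_le_exists_transpose:
  assumes u: "u permutes {..<n}" and v: "v permutes {..<n}" and tab: "tableau_le n u v" and "u \<noteq> v"
  obtains p q where "p < q" "q < n" "u p < u q" "tableau_le n (u \<circ> transpose p q) v"
proof -
  have ex: "\<exists>r. r < n \<and> u r \<noteq> v r"
    using \<open>u \<noteq> v\<close> permutes_not_in[OF u] permutes_not_in[OF v] by (metis ext lessThan_iff)
  define p where "p = (LEAST r. r < n \<and> u r \<noteq> v r)"
  have p: "p < n" "u p \<noteq> v p" unfolding p_def using LeastI_ex[OF ex] by auto
  have pre: "u r = v r" if "r < p" for r
    using not_less_Least[OF that[unfolded p_def]] that p(1) unfolding p_def by auto
  have uv: "u p < v p" by (rule tableau_le_first_difference_less[OF tab p pre])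
  define r0 where "r0 = inv u (v p)"
  have r0: "r0 < n" "u r0 = v p" unfolding r0_def
    using permutes_lessThan_inv_apply[OF u permutes_lessThan_apply[OF v p(1)]] permutes_inverses[OF u]
    by auto
  have "\<not> r0 < p"
    using r0 pre permutes_inj[OF v] by (metis injD less_irrefl)
  moreover have "r0 \<noteq> p" using r0 p by auto
  ultimately have "p < r0" by simp
  then have exq: "\<exists>r. p < r \<and> r < n \<and> u p < u r \<and> u r \<le> v p" using r0 uv by auto
  define q where "q = (LEAST r. p < r \<and> r < n \<and> u p < u r \<and> u r \<le> v p)"
  have q: "p < q" "q < n" "u p < u q" "u q \<le> v p"
    using LeastI_ex[OF exq] unfolding q_def by auto
  have gap: "\<not> (u p < u r \<and> u r \<le> v p)" if "p < r" "r < q" for r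
    using not_less_Least[OF that(2)[unfolded q_def]] that q(2) unfolding q_def by auto
  have "tableau_le n (u \<circ> transpose p q) v" unfolding tableau_le_def
  proof (intro allI)
    fix i c
    show "rank_ge n (u \<circ> transpose p q) i c \<le> rank_ge n v i c"
    proof (cases "p \<le> i \<and> i < q \<and> u p < c \<and> c \<le> u q")
      case True
      have "rank_ge n u i c < rank_ge n v i c"
        by (rule rank_ge_less_beyond_first_difference[OF u v tab p(1) pre]) (use True q gap in auto)
      then show ?thesis using rank_ge_comp_transpose[OF u q(1-3)] True by simp
    next
      case False
      then have "rank_ge n (u \<circ> transpose p q) i c = rank_ge n u i c"
        using rank_ge_comp_transpose[OF u q(1-3)] by presburger
      then show ?thesis using tab by (simp add: tableau_le_def)
    qed
  qed
  then show ?thesis using that q by blast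
qed

definition rank_sum :: "nat \<Rightarrow> (nat \<Rightarrow> nat) \<Rightarrow> nat" where
  "rank_sum n w = (\<Sum>i<n. \<Sum>c\<le>n. rank_ge n w i c)"

lemma tableau_le_imp_rank_sum_le: "tableau_le n u v \<Longrightarrow> rank_sum n u \<le> rank_sum n v"
  unfolding rank_sum_def tableau_le_def by (intro sum_mono) auto

lemma rank_sum_less_comp_transpose:
  assumes u: "u permutes {..<n}" and pq: "p < q" "q < n" and upq: "u p < u q"
  shows "rank_sum n u < rank_sum n (u \<circ> transpose p q)"
proof -
  have rank: "rank_ge n (u \<circ> transpose p q) i c =
      rank_ge n u i c + (if p \<le> i \<and> i < q \<and> u p < c \<and> c \<le> u q then 1 else 0)" for i c
    by (rule rank_ge_comp_transpose[OF u pq upq])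
  have "(\<Sum>c\<le>n. rank_ge n u p c) < (\<Sum>c\<le>n. rank_ge n (u \<circ> transpose p q) p c)"
  proof (rule sum_strict_mono_ex1)
    show "\<exists>c\<in>{..n}. rank_ge n u p c < rank_ge n (u \<circ> transpose p q) p c"
      using rank[of p "u q"] pq upq permutes_lessThan_apply[OF u pq(2)] by (intro bexI[of _ "u q"]) auto
  qed (use rank in auto)
  then show ?thesis unfolding rank_sum_def
  proof (intro sum_strict_mono_ex1)
    show "\<exists>i\<in>{..<n}. (\<Sum>c\<le>n. rank_ge n u i c) < (\<Sum>c\<le>n. rank_ge n (u \<circ> transpose p q) i c)"
      if "(\<Sum>c\<le>n. rank_ge n u p c) < (\<Sum>c\<le>n. rank_ge n (u \<circ> transpose p q) p c)"
      using that pq by (intro bexI[of _ p]) auto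
  qed (use rank in \<open>auto intro!: sum_mono\<close>)
qed

lemma bruhat_refl: "u permutes {..<n} \<Longrightarrow> bruhat_le n u u"
  by (simp add: bruhat_le_def Sn_def)

lemma bruhat_trans: "bruhat_le n u v \<Longrightarrow> bruhat_le n v w \<Longrightarrow> bruhat_le n u w"
  unfolding bruhat_le_def by (auto intro: rtranclp_trans)

lemma bruhat_le_reflection_comp:
  assumes x: "x permutes {..<n}" and t: "t \<in> refls n" and l: "clen n x < clen n (t \<circ> x)"
  shows "bruhat_le n x (t \<circ> x)"
proof -
  have "t \<circ> x permutes {..<n}"
    using t by (auto simp: refls_eq intro!: permutes_compose[OF x] permutes_swap_id)
  moreover have "(\<lambda>x y. \<exists>t\<in>refls n. y = t \<circ> x \<and> clen n x < clen n y) x (t \<circ> x)"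
    using t l by blast
  ultimately show ?thesis using x unfolding bruhat_le_def Sn_def by (simp add: r_into_rtranclp)
qed

lemma bruhat_le_comp_transpose:
  assumes u: "u permutes {..<n}" and pq: "p < q" "q < n" and upq: "u p < u q"
  shows "bruhat_le n u (u \<circ> transpose p q)"
proof -
  have u': "u \<circ> transpose p q permutes {..<n}"
    using pq by (intro permutes_compose[OF _ u] permutes_swap_id) auto
  have eq: "transpose (u p) (u q) \<circ> u = u \<circ> transpose p q"
    using transpose_comp_eq[OF permutes_bij[OF u]] permutes_inverses[OF u] by simp
  have "transpose (u p) (u q) \<in> refls n"
    using upq permutes_lessThan_apply[OF u pq(2)] by (rule transpose_in_refls)
  moreover have "clen n u < clen n (transpose (u p) (u q) \<circ> u)"
    using ninversions_less_comp_transpose[OF u pq upq] clen_eq_ninversions[OF u] clen_eq_ninversions[OF u']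
    by (simp add: eq)
  ultimately show ?thesis using bruhat_le_reflection_comp[OF u] eq by metis
qed

lemma tableau_le_imp_bruhat_le:
  "u permutes {..<n} \<Longrightarrow> v permutes {..<n} \<Longrightarrow> tableau_le n u v \<Longrightarrow> bruhat_le n u v"
proof (induction "rank_sum n v - rank_sum n u" arbitrary: u rule: less_induct)
  case less
  show ?case
  proof (cases "u = v")
    case True then show ?thesis using bruhat_refl less.prems by simp
  next
    case False
    then obtain p q where pq: "p < q" "q < n" "u p < u q" and tab: "tableau_le n (u \<circ> transpose p q) v"
      using tableau_le_exists_transpose less.prems by blast
    have u': "u \<circ> transpose p q permutes {..<n}"
      using pq by (intro permutes_compose[OF _ less.prems(1)] permutes_swap_id) auto
    have "rank_sum n v - rank_sum n (u \<circ> transpose p q) < rank_sum n v - rank_sum n u"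
      using rank_sum_less_comp_transpose[OF less.prems(1) pq] tableau_le_imp_rank_sum_le[OF tab] by simp
    then have "bruhat_le n (u \<circ> transpose p q) v" using less.hyps u' less.prems(2) tab by blast
    then show ?thesis using bruhat_le_comp_transpose[OF less.prems(1) pq] bruhat_trans by blast
  qed
qed

lemma bruhat_le_iff_tableau_le:
  "u permutes {..<n} \<Longrightarrow> v permutes {..<n} \<Longrightarrow> bruhat_le n u v \<longleftrightarrow> tableau_le n u v"
  using bruhat_le_imp_tableau_le tableau_le_imp_bruhat_le by blast

section \<open>Grassmannian permutations and maximal parabolic quotients\<close>

definition grassmannian :: "nat \<Rightarrow> nat \<Rightarrow> (nat \<Rightarrow> nat) \<Rightarrow> bool" where
  "grassmannian n i g \<longleftrightarrow> (\<forall>j. Suc j < n \<and> j \<noteq> i \<longrightarrow> g j < g (Suc j))"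

lemma grassmannian_strict_mono_on_low:
  "grassmannian n i g \<Longrightarrow> i < n \<Longrightarrow> strict_mono_on {0..<Suc i} g"
  unfolding grassmannian_def by (intro strict_mono_on_atLeastLessThan_SucI) auto

lemma grassmannian_strict_mono_on_high:
  "grassmannian n i g \<Longrightarrow> strict_mono_on {Suc i..<n} g"
  unfolding grassmannian_def by (intro strict_mono_on_atLeastLessThan_SucI) auto

lemma grassmannian_less:
  assumes "grassmannian n i g" "i < n" "x < y" "y < n" "y \<le> i \<or> i < x"
  shows "g x < g y"
  using assms strict_mono_onD[OF grassmannian_strict_mono_on_low[OF assms(1,2)], of x y]
    strict_mono_onD[OF grassmannian_strict_mono_on_high[OF assms(1)], of x y]
  by auto

lemma grassmannian_eqI:
  assumes g: "g permutes {..<n}" and g': "g' permutes {..<n}"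
    and gi: "grassmannian n i g" and gi': "grassmannian n i g'"
    and i: "i < n" and img: "g ` {..i} = g' ` {..i}"
  shows "g = g'"
proof
  fix x
  have "g ` {Suc i..<n} = g' ` {Suc i..<n}"
  proof -
    have "{Suc i..<n} = {..<n} - {..i}" by auto
    then show ?thesis
      using img permutes_image[OF g] permutes_image[OF g']
      by (simp add: image_set_diff[OF permutes_inj[OF g]] image_set_diff[OF permutes_inj[OF g']])
  qed
  moreover have "{0..<Suc i} = {..i}" by auto
  ultimately show "g x = g' x"
    using strict_mono_on_image_eq[OF grassmannian_strict_mono_on_low[OF gi i]
        grassmannian_strict_mono_on_low[OF gi' i], of x]
      strict_mono_on_image_eq[OF grassmannian_strict_mono_on_high[OF gi]
        grassmannian_strict_mono_on_high[OF gi'], of x]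
      img permutes_not_in[OF g] permutes_not_in[OF g']
    by (cases "x \<le> i"; cases "x < n") auto
qed

text \<open>The Grassmannian permutation lists \<open>A\<close> increasingly, followed by its complement.\<close>
lemma grassmannian_exists:
  assumes A: "A \<subseteq> {..<n}" and cA: "card A = Suc i" and i: "i < n"
  obtains g where "g permutes {..<n}" "grassmannian n i g" "g ` {..i} = A"
proof -
  define L1 where "L1 = sorted_list_of_set A"
  define L2 where "L2 = sorted_list_of_set ({..<n} - A)"
  define L where "L = L1 @ L2"
  have fA: "finite A" using A finite_subset by blast
  have L1: "set L1 = A" "length L1 = Suc i" "sorted_wrt (<) L1" "distinct L1"
    using fA cA by (simp_all add: L1_def)
  have L2: "set L2 = {..<n} - A" "sorted_wrt (<) L2" "distinct L2"
    by (simp_all add: L2_def)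
  have setL: "set L = {..<n}" using L1 L2 A by (auto simp: L_def)
  have dL: "distinct L" using L1 L2 by (auto simp: L_def)
  have lenL: "length L = n" using distinct_card[OF dL] setL by simp
  define g where "g = (\<lambda>r. if r < n then L ! r else r)"
  have "bij_betw ((!) L) {..<n} {..<n}" using bij_betw_nth[OF dL] lenL setL by simp
  then have "bij_betw g {..<n} {..<n}" by (rule bij_betw_cong[THEN iffD1, rotated]) (simp add: g_def)
  then have perm: "g permutes {..<n}" by (rule bij_imp_permutes) (simp add: g_def)
  have low: "g r = L1 ! r" if "r \<le> i" for r using that i L1 by (simp add: g_def L_def nth_append)
  have high: "g r = L2 ! (r - Suc i)" if "i < r" "r < n" for r
    using that L1 by (simp add: g_def L_def nth_append)
  have "g ` {..i} = (!) L1 ` {0..<Suc i}" using low by (auto simp: atLeast0LessThan lessThan_Suc_atMost)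
  also have "\<dots> = A" using nth_image[of "Suc i" L1] L1 by simp
  finally have img: "g ` {..i} = A" .
  have "grassmannian n i g" unfolding grassmannian_def
  proof (intro allI impI)
    fix j assume j: "Suc j < n \<and> j \<noteq> i"
    show "g j < g (Suc j)"
    proof (cases "j < i")
      case True
      then show ?thesis using low sorted_wrt_nth_less[OF L1(3), of j "Suc j"] L1 by simp
    next
      case False
      then have "i < j" using j by simp
      moreover have "length L2 = n - Suc i" using lenL L1 by (simp add: L_def)
      ultimately show ?thesis
        using high[of j] high[of "Suc j"] j sorted_wrt_nth_less[OF L2(2), of "j - Suc i" "Suc j - Suc i"]
        by simp
    qed
  qed
  then show ?thesis using that perm img by blast
qed

lemma WupJ_iff_grassmannian:
  "w \<in> WupJ n (gens n - {sgen i}) \<longleftrightarrow> w permutes {..<n} \<and> grassmannian n i w"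
proof -
  have "(\<forall>s\<in>gens n - {sgen i}. clen n w < clen n (w \<circ> s)) \<longleftrightarrow> grassmannian n i w"
    if w: "w permutes {..<n}"
    unfolding Ball_def gens_remove_iff grassmannian_def using clen_less_comp_sgen_iff[OF w] by auto
  then show ?thesis by (auto simp: WupJ_def Sn_def)
qed

lemma word_prod_image_atMost:
  "set xs \<subseteq> gens n - {sgen i} \<Longrightarrow> word_prod xs ` {..i} = {..i}"
proof (induction xs)
  case Nil then show ?case by (simp add: word_prod_Nil)
next
  case (Cons x xs)
  then have "x \<in> gens n - {sgen i}" by simp
  then obtain j where "x = sgen j" "j \<noteq> i" unfolding gens_remove_iff by blast
  then have "word_prod (x # xs) ` {..i} = sgen j ` (word_prod xs ` {..i})"
    by (simp add: word_prod_Cons image_comp)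
  then show ?case using Cons \<open>j \<noteq> i\<close> by (simp add: sgen_image_atMost)
qed

lemma WJ_iff_stabilises:
  "v \<in> WJ n (gens n - {sgen i}) \<longleftrightarrow> v permutes {..<n} \<and> v ` {..i} = {..i}"
proof
  assume "v \<in> WJ n (gens n - {sgen i})"
  then obtain xs where "v = word_prod xs" "set xs \<subseteq> gens n - {sgen i}" by (auto simp: WJ_def)
  then show "v permutes {..<n} \<and> v ` {..i} = {..i}"
    using word_prod_image_atMost word_prod_permutes by blast
next
  assume "v permutes {..<n} \<and> v ` {..i} = {..i}"
  then obtain xs where xs: "set xs \<subseteq> {sgen j | j. Suc j < n \<and> j \<notin> {i}}" "word_prod xs = v"
    using reduced_word_exists[of v n "{i}"] by auto
  then have "set xs \<subseteq> gens n - {sgen i}" by (auto simp: gens_def dest: sgen_inj)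
  then show "v \<in> WJ n (gens n - {sgen i})" using xs(2) unfolding WJ_def by blast
qed

lemma stabilises_atMost_iff:
  assumes v: "v permutes {..<n}" and vi: "v ` {..i} = {..i}"
  shows "v x \<le> i \<longleftrightarrow> x \<le> i"
  using vi inj_image_mem_iff[OF permutes_inj[OF v], of x "{..i}"] by simp

lemma inversions_grassmannian_comp_same_block:
  assumes g: "grassmannian n i g" and v: "v permutes {..<n}" and vi: "v ` {..i} = {..i}" and i: "i < n"
  shows "{(r, s) \<in> inversions n (g \<circ> v). s \<le> i \<or> i < r} = inversions n v"
proof (rule set_eqI, clarify)
  fix r s
  have pres: "v x \<le> i \<longleftrightarrow> x \<le> i" for x by (rule stabilises_atMost_iff[OF v vi])
  have "g (v s) < g (v r) \<longleftrightarrow> v s < v r" if rs: "r < s" "s < n" "s \<le> i \<or> i < r"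
  proof -
    have block: "v s \<le> i \<and> v r \<le> i \<or> i < v r \<and> i < v s"
      using rs pres[of r] pres[of s] by auto
    have "v r < n" "v s < n" using rs permutes_lessThan_apply[OF v] by auto
    then have "g (v s) < g (v r)" if "v s < v r" using grassmannian_less[OF g i that] block by auto
    moreover have "g (v r) < g (v s)" if "v r < v s"
      using grassmannian_less[OF g i that] block \<open>v s < n\<close> by auto
    moreover have "v r \<noteq> v s" using rs permutes_inj[OF v] by (metis injD less_irrefl)
    ultimately show ?thesis by (meson less_asym linorder_neqE_nat)
  qed
  moreover have "\<not> v s < v r" if "r < s" "\<not> (s \<le> i \<or> i < r)"
    using that pres[of r] pres[of s] by auto
  ultimately show "(r, s) \<in> {(r, s) \<in> inversions n (g \<circ> v). s \<le> i \<or> i < r} \<longleftrightarrow> (r, s) \<in> inversions n v"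
    by (auto simp: inversions_def)
qed

lemma inversions_grassmannian_comp_cross_block:
  assumes g: "grassmannian n i g" and v: "v permutes {..<n}" and vi: "v ` {..i} = {..i}" and i: "i < n"
  shows "bij_betw (map_prod v v) {(r, s) \<in> inversions n (g \<circ> v). r \<le> i \<and> i < s} (inversions n g)"
proof (rule bij_betw_imageI)
  let ?C = "{(r, s) \<in> inversions n (g \<circ> v). r \<le> i \<and> i < s}"
  show "inj_on (map_prod v v) ?C"
    using prod.inj_map[OF permutes_inj[OF v] permutes_inj[OF v]] by (rule inj_on_subset) simp
  have pres: "v x \<le> i \<longleftrightarrow> x \<le> i" for x by (rule stabilises_atMost_iff[OF v vi])
  have "(v r, v s) \<in> inversions n g" if "(r, s) \<in> ?C" for r s
    using that pres[of r] pres[of s] permutes_lessThan_apply[OF v, of s] by (simp add: inversions_def)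
  moreover have "(x, y) \<in> map_prod v v ` ?C" if "(x, y) \<in> inversions n g" for x y
  proof -
    have xy: "x < y" "y < n" "g y < g x" using that by (simp_all add: inversions_def)
    then have "\<not> (y \<le> i \<or> i < x)" using grassmannian_less[OF g i xy(1,2)] by auto
    then have "inv v x \<le> i" "i < inv v y"
      using pres[of "inv v x"] pres[of "inv v y"] permutes_inverses(1)[OF v] by auto
    moreover have "inv v y < n" by (rule permutes_lessThan_inv_apply[OF v xy(2)])
    ultimately have "(inv v x, inv v y) \<in> ?C"
      using xy(3) permutes_inverses(1)[OF v] by (simp add: inversions_def)
    moreover have "(x, y) = map_prod v v (inv v x, inv v y)" by (simp add: permutes_inverses(1)[OF v])
    ultimately show ?thesis by (rule rev_image_eqI)
  qed
  ultimately show "map_prod v v ` ?C = inversions n g" by auto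
qed

lemma ninversions_grassmannian_comp:
  assumes "grassmannian n i g" "v permutes {..<n}" "v ` {..i} = {..i}" "i < n"
  shows "ninversions n (g \<circ> v) = ninversions n g + ninversions n v"
proof -
  define same where "same = {(r, s) \<in> inversions n (g \<circ> v). s \<le> i \<or> i < r}"
  define cross where "cross = {(r, s) \<in> inversions n (g \<circ> v). r \<le> i \<and> i < s}"
  have "inversions n (g \<circ> v) = same \<union> cross" "same \<inter> cross = {}"
    unfolding same_def cross_def by (auto simp: not_le)
  moreover have "finite same" "finite cross"
    unfolding same_def cross_def using finite_inversions by (auto intro: finite_subset)
  ultimately have "ninversions n (g \<circ> v) = card same + card cross"
    by (simp add: ninversions_def card_Un_disjoint)
  then show ?thesis
    using inversions_grassmannian_comp_same_block[OF assms]
      bij_betw_same_card[OF inversions_grassmannian_comp_cross_block[OF assms]]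
    by (simp add: ninversions_def same_def cross_def)
qed

abbreviation PJ_max :: "nat \<Rightarrow> nat \<Rightarrow> (nat \<Rightarrow> nat) \<Rightarrow> nat \<Rightarrow> nat" where
  "PJ_max n i \<equiv> PJ n (gens n - {sgen i})"

lemma PJ_max_grassmannian:
  assumes w: "w permutes {..<n}" and i: "Suc i < n"
  shows "PJ_max n i w permutes {..<n}" "grassmannian n i (PJ_max n i w)"
    "PJ_max n i w ` {..i} = w ` {..i}"
proof -
  let ?J = "gens n - {sgen i}"
  have "w ` {..i} \<subseteq> {..<n}" using permutes_lessThan_apply[OF w] i by auto
  moreover have "card (w ` {..i}) = Suc i"
    using permutes_inj[OF w] by (simp add: card_image inj_on_subset)
  ultimately obtain g where g: "g permutes {..<n}" "grassmannian n i g" "g ` {..i} = w ` {..i}"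
    using grassmannian_exists i by (metis Suc_lessD)
  define v where "v = inv g \<circ> w"
  have vp: "v permutes {..<n}" unfolding v_def by (rule permutes_compose[OF w permutes_inv[OF g(1)]])
  have "v ` {..i} \<subseteq> {..i}"
    using g(3) permutes_inverses[OF g(1)] permutes_inj[OF g(1)] by (force simp: v_def)
  then have vi: "v ` {..i} = {..i}" by (rule permutes_image_atMost_eq[OF vp])
  have wgv: "w = g \<circ> v" unfolding v_def by (simp add: o_assoc permutes_inv_o[OF g(1)])
  let ?P = "\<lambda>u. u \<in> WupJ n ?J \<and> (\<exists>v\<in>WJ n ?J. w = u \<circ> v \<and> clen n w = clen n u + clen n v)"
  have Pg: "?P g"
  proof (intro conjI bexI)
    show "g \<in> WupJ n ?J" using g WupJ_iff_grassmannian by blast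
    show "v \<in> WJ n ?J" using vp vi WJ_iff_stabilises by blast
    show "clen n w = clen n g + clen n v"
      using clen_eq_ninversions[OF w] clen_eq_ninversions[OF g(1)] clen_eq_ninversions[OF vp]
        ninversions_grassmannian_comp[OF g(2) vp vi] i wgv by simp
  qed (rule wgv)
  have uniq: "u = g" if Pu: "?P u" for u
  proof -
    obtain v' where "v' \<in> WJ n ?J" "w = u \<circ> v'" using Pu by blast
    then have "u ` {..i} = w ` {..i}" using WJ_iff_stabilises by (metis image_comp)
    then show "u = g"
      using Pu grassmannian_eqI[OF _ g(1) _ g(2)] i g(3) WupJ_iff_grassmannian by force
  qed
  have "PJ n ?J w = g" unfolding PJ_def by (rule the1_equality) (use Pg uniq in blast)+
  then show "PJ_max n i w permutes {..<n}" "grassmannian n i (PJ_max n i w)"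
    "PJ_max n i w ` {..i} = w ` {..i}" using g by simp_all
qed

section \<open>Chains of simple reflections between Grassmannian permutations\<close>

definition count_ge :: "nat set \<Rightarrow> nat \<Rightarrow> nat" where
  "count_ge A c = card {x \<in> A. c \<le> x}"

lemma count_ge_sgen_image:
  assumes A: "finite A" and j: "j \<in> A" "Suc j \<notin> A"
  shows "count_ge (sgen j ` A) c = count_ge A c + (if c = Suc j then 1 else 0)"
proof -
  have img: "sgen j ` A = insert (Suc j) (A - {j})"
  proof (intro equalityI subsetI)
    fix x assume "x \<in> insert (Suc j) (A - {j})"
    then show "x \<in> sgen j ` A" using j by (intro image_eqI[of _ _ "sgen j x"]) (auto simp: sgen_apply)
  qed (use j in \<open>auto simp: sgen_apply\<close>)
  have f: "finite {x \<in> A. c \<le> x}" using A by simp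
  consider "c \<le> j" | "c = Suc j" | "Suc j < c" by linarith
  then show ?thesis
  proof cases
    case 1
    then have "{x \<in> sgen j ` A. c \<le> x} = insert (Suc j) ({x \<in> A. c \<le> x} - {j})" using img by auto
    moreover have "card {x \<in> A. c \<le> x} > 0" using 1 j f card_gt_0_iff by blast
    ultimately show ?thesis using 1 f j by (simp add: count_ge_def)
  next
    case 2
    then have "{x \<in> sgen j ` A. c \<le> x} = insert (Suc j) {x \<in> A. c \<le> x}" using img by auto
    then show ?thesis using 2 f j by (simp add: count_ge_def)
  next
    case 3
    then have "{x \<in> sgen j ` A. c \<le> x} = {x \<in> A. c \<le> x}" using img by auto
    then show ?thesis using 3 by (simp add: count_ge_def)
  qed
qed

text \<open>The largest element of the symmetric difference lies in \<open>A'\<close>, and the counts differ there.\<close>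
lemma count_ge_less_at_new_element:
  assumes fin: "finite A" "finite A'" and ne: "A \<noteq> A'" and dom: "\<And>c. count_ge A c \<le> count_ge A' c"
  obtains c where "c \<in> A'" "c \<notin> A" "count_ge A c < count_ge A' c"
proof -
  define D where "D = (A - A') \<union> (A' - A)"
  have fD: "finite D" "D \<noteq> {}" using fin ne unfolding D_def by auto
  define c where "c = Max D"
  have cD: "c \<in> D" unfolding c_def using fD by simp
  have above: "{x \<in> A. c < x} = {x \<in> A'. c < x}"
    using fD Max_ge[OF fD(1)] unfolding c_def D_def by fastforce
  have fa: "finite {x \<in> A. c < x}" using fin by simp
  have split: "{x \<in> B. c \<le> x} = (if c \<in> B then insert c {x \<in> B. c < x} else {x \<in> B. c < x})" for B
    by (auto simp: le_less)
  have "c \<in> A' - A"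
  proof (rule ccontr)
    assume "c \<notin> A' - A"
    then have "c \<in> A" "c \<notin> A'" using cD unfolding D_def by auto
    then have "count_ge A' c < count_ge A c"
      using fa above split[of A] split[of A'] by (simp add: count_ge_def)
    then show False using dom[of c] by simp
  qed
  moreover from this have "count_ge A c < count_ge A' c"
    using fa above split[of A] split[of A'] by (simp add: count_ge_def)
  ultimately show ?thesis using that by blast
qed

text \<open>At the least \<open>c \<notin> A\<close> where the counts differ, \<open>c - 1 \<in> A\<close>; replacing it by \<open>c\<close> moves \<open>A\<close> one
  step towards \<open>A'\<close>.\<close>
lemma count_ge_dominance_step:
  assumes A: "A \<subseteq> {..<n}" and A': "A' \<subseteq> {..<n}" and card: "card A = card A'" and ne: "A \<noteq> A'"
    and dom: "\<And>c. count_ge A c \<le> count_ge A' c"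
  obtains j where "j \<in> A" "Suc j \<notin> A" "Suc j < n" "count_ge A (Suc j) < count_ge A' (Suc j)"
proof -
  have fin: "finite A" "finite A'" using A A' finite_subset by auto
  obtain c1 where c1: "c1 \<in> A'" "c1 \<notin> A" "count_ge A c1 < count_ge A' c1"
    using count_ge_less_at_new_element[OF fin ne dom] by blast
  then have ex: "\<exists>c. count_ge A c < count_ge A' c \<and> c \<notin> A" by blast
  define c0 where "c0 = (LEAST c. count_ge A c < count_ge A' c \<and> c \<notin> A)"
  have c0: "count_ge A c0 < count_ge A' c0" "c0 \<notin> A"
    using LeastI_ex[OF ex] unfolding c0_def by auto
  have "c0 \<le> c1" unfolding c0_def by (rule Least_le) (use c1 in blast)
  then have "c0 < n" using c1 A' by auto
  have "c0 \<noteq> 0"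
  proof
    assume "c0 = 0"
    then show False using c0(1) card by (simp add: count_ge_def)
  qed
  then obtain j where j: "c0 = Suc j" by (cases c0) auto
  have "j \<in> A"
  proof (rule ccontr)
    assume jn: "j \<notin> A"
    have "{x \<in> A. j \<le> x} = {x \<in> A. c0 \<le> x}" using jn j by (auto simp: Suc_le_eq le_less)
    moreover have "count_ge A' c0 \<le> count_ge A' j" unfolding count_ge_def using fin j by (intro card_mono) auto
    ultimately have "count_ge A j < count_ge A' j \<and> j \<notin> A" using c0 jn by (simp add: count_ge_def)
    then have "c0 \<le> j" unfolding c0_def by (rule Least_le)
    then show False using j by simp
  qed
  then show ?thesis using that c0 j \<open>c0 < n\<close> by blast
qed

lemma grassmannian_sgen_comp:
  assumes g: "g permutes {..<n}" and gi: "grassmannian n i g" and jn: "Suc j < n"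
    and j: "j \<in> g ` {..i}" "Suc j \<notin> g ` {..i}"
  shows "grassmannian n i (sgen j \<circ> g)" "ninversions n (sgen j \<circ> g) = Suc (ninversions n g)"
proof -
  have low: "g x \<in> g ` {..i} \<longleftrightarrow> x \<le> i" for x
    using inj_image_mem_iff[OF permutes_inj[OF g]] by simp
  show "grassmannian n i (sgen j \<circ> g)" unfolding grassmannian_def
  proof (intro allI impI)
    fix j' assume j': "Suc j' < n \<and> j' \<noteq> i"
    have lt: "g j' < g (Suc j')" using gi j' unfolding grassmannian_def by blast
    have "\<not> (g j' = j \<and> g (Suc j') = Suc j)"
    proof
      assume "g j' = j \<and> g (Suc j') = Suc j"
      then have "j' \<le> i" "\<not> Suc j' \<le> i" using low[of j'] low[of "Suc j'"] j by auto
      then show False using j' by linarith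
    qed
    then show "(sgen j \<circ> g) j' < (sgen j \<circ> g) (Suc j')"
      using sgen_less_sgen_iff[of "g j'" "g (Suc j')" j] lt by auto
  qed
  let ?p = "inv g j" and ?q = "inv g (Suc j)"
  have pq: "g ?p = j" "g ?q = Suc j" "?q < n"
    using permutes_inverses[OF g] permutes_lessThan_inv_apply[OF g jn] by auto
  then have "?p \<le> i" "\<not> ?q \<le> i" using low[of ?p] low[of ?q] j by auto
  then show "ninversions n (sgen j \<circ> g) = Suc (ninversions n g)"
    using ninversions_sgen_comp[OF g _ pq(3) pq(1) pq(2)] by simp
qed

lemma bruhat_less_sgen_comp:
  assumes g: "g permutes {..<n}" and j: "Suc j < n"
    and ninv: "ninversions n (sgen j \<circ> g) = Suc (ninversions n g)"
  shows "bruhat_less n g (sgen j \<circ> g)"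
proof -
  have g1: "sgen j \<circ> g permutes {..<n}" by (rule permutes_compose[OF g sgen_permutes[OF j]])
  have "sgen j \<in> refls n" using transpose_in_refls[of j "Suc j" n] j by (simp add: sgen_def)
  moreover have "clen n g < clen n (sgen j \<circ> g)"
    using ninv clen_eq_ninversions[OF g] clen_eq_ninversions[OF g1] by simp
  ultimately have "bruhat_le n g (sgen j \<circ> g)" by (rule bruhat_le_reflection_comp[OF g])
  moreover have "sgen j \<circ> g \<noteq> g" using ninv by auto
  ultimately show ?thesis by (simp add: bruhat_less_def)
qed

lemma grassmannian_dominance_step:
  assumes g: "g permutes {..<n}" and g': "g' permutes {..<n}"
    and gi: "grassmannian n i g" and gi': "grassmannian n i g'" and i: "Suc i < n"
    and dom: "\<And>c. count_ge (g ` {..i}) c \<le> count_ge (g' ` {..i}) c" and "g \<noteq> g'"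
  obtains j where "Suc j < n" "grassmannian n i (sgen j \<circ> g)"
    "ninversions n (sgen j \<circ> g) = Suc (ninversions n g)"
    "\<And>c. count_ge ((sgen j \<circ> g) ` {..i}) c \<le> count_ge (g' ` {..i}) c"
    "(\<Sum>c\<le>n. count_ge (g' ` {..i}) c - count_ge ((sgen j \<circ> g) ` {..i}) c)
      < (\<Sum>c\<le>n. count_ge (g' ` {..i}) c - count_ge (g ` {..i}) c)"
proof -
  let ?A = "g ` {..i}" and ?A' = "g' ` {..i}"
  have ne: "?A \<noteq> ?A'" using grassmannian_eqI[OF g g' gi gi'] i \<open>g \<noteq> g'\<close> by auto
  have sub: "?A \<subseteq> {..<n}" "?A' \<subseteq> {..<n}"
    using permutes_lessThan_apply[OF g] permutes_lessThan_apply[OF g'] i by auto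
  have card: "card ?A = card ?A'"
    using permutes_inj[OF g] permutes_inj[OF g'] by (simp add: card_image inj_on_subset)
  obtain j where j: "j \<in> ?A" "Suc j \<notin> ?A" "Suc j < n" "count_ge ?A (Suc j) < count_ge ?A' (Suc j)"
    using count_ge_dominance_step[OF sub card ne dom] by blast
  have count1: "count_ge ((sgen j \<circ> g) ` {..i}) c = count_ge ?A c + (if c = Suc j then 1 else 0)" for c
    unfolding image_comp[symmetric] using sub j by (intro count_ge_sgen_image) (auto intro: finite_subset)
  have dom1: "count_ge ((sgen j \<circ> g) ` {..i}) c \<le> count_ge ?A' c" for c
    using count1[of c] j(4) dom[of c] by (cases "c = Suc j") auto
  have "(\<Sum>c\<le>n. count_ge ?A' c - count_ge ((sgen j \<circ> g) ` {..i}) c) < (\<Sum>c\<le>n. count_ge ?A' c - count_ge ?A c)"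
  proof (rule sum_strict_mono_ex1)
    show "\<exists>c\<in>{..n}. count_ge ?A' c - count_ge ((sgen j \<circ> g) ` {..i}) c < count_ge ?A' c - count_ge ?A c"
      using count1 j dom1 by (intro bexI[of _ "Suc j"]) auto
  qed (use count1 in auto)
  then show ?thesis using that j(3) dom1 grassmannian_sgen_comp[OF g gi j(3) j(1,2)] by blast
qed

lemma grassmannian_lchain:
  "g permutes {..<n} \<Longrightarrow> g' permutes {..<n} \<Longrightarrow> grassmannian n i g \<Longrightarrow> grassmannian n i g' \<Longrightarrow>
   Suc i < n \<Longrightarrow> (\<And>c. count_ge (g ` {..i}) c \<le> count_ge (g' ` {..i}) c) \<Longrightarrow>
   lchain n k g g' \<and> (g = g' \<or> ninversions n g < ninversions n g')"
proof (induction "\<Sum>c\<le>n. count_ge (g' ` {..i}) c - count_ge (g ` {..i}) c" arbitrary: g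
    rule: less_induct)
  case less
  note g = less.prems(1) and i = less.prems(5)
  show ?case
  proof (cases "g = g'")
    case True then show ?thesis by (simp add: lchain.base)
  next
    case False
    obtain j where j: "Suc j < n" "grassmannian n i (sgen j \<circ> g)"
        "ninversions n (sgen j \<circ> g) = Suc (ninversions n g)"
        "\<And>c. count_ge ((sgen j \<circ> g) ` {..i}) c \<le> count_ge (g' ` {..i}) c"
        "(\<Sum>c\<le>n. count_ge (g' ` {..i}) c - count_ge ((sgen j \<circ> g) ` {..i}) c)
          < (\<Sum>c\<le>n. count_ge (g' ` {..i}) c - count_ge (g ` {..i}) c)"
      by (rule grassmannian_dominance_step[OF less.prems False]) blast
    have "sgen j \<circ> g permutes {..<n}" by (rule permutes_compose[OF g sgen_permutes[OF j(1)]])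
    then have IH: "lchain n k (sgen j \<circ> g) g' \<and>
        (sgen j \<circ> g = g' \<or> ninversions n (sgen j \<circ> g) < ninversions n g')"
      using less.hyps[OF j(5)] less.prems j by blast
    have "lchain n k g g'"
      using lchain.step[OF sgen_in_Tk[OF j(1)] bruhat_less_sgen_comp[OF g j(1,3)]] IH by blast
    then show ?thesis using IH j(3) by auto
  qed
qed

section \<open>The embedding into the product of maximal parabolic quotients\<close>

lemma rank_ge_eq_count_ge:
  assumes w: "w permutes {..<n}" and i: "i < n"
  shows "rank_ge n w i c = count_ge (w ` {..i}) c"
proof -
  have "{x \<in> w ` {..i}. c \<le> x} = w ` {r. r \<le> i \<and> r < n \<and> c \<le> w r}" using i by auto
  then show ?thesis
    using permutes_inj_on[OF w] by (simp add: rank_ge_def count_ge_def card_image)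
qed

lemma rank_ge_beyond_last:
  assumes w: "w permutes {..<n}" and i: "n \<le> Suc i"
  shows "rank_ge n w i c = card {x. x < n \<and> c \<le> x}"
proof -
  have "{r. r \<le> i \<and> r < n \<and> c \<le> w r} = {r \<in> {..<n}. c \<le> w r}" using i by auto
  then have "rank_ge n w i c = card (w ` {r \<in> {..<n}. c \<le> w r})"
    by (simp add: rank_ge_def card_image[OF permutes_inj_on[OF w]])
  also have "w ` {r \<in> {..<n}. c \<le> w r} = {x \<in> w ` {..<n}. c \<le> x}" by auto
  finally show ?thesis using permutes_image[OF w] by simp
qed

lemma tableau_le_iff_count_ge:
  assumes u: "u permutes {..<n}" and v: "v permutes {..<n}"
  shows "tableau_le n u v \<longleftrightarrow>
    (\<forall>i. Suc i < n \<longrightarrow> (\<forall>c. count_ge (u ` {..i}) c \<le> count_ge (v ` {..i}) c))"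
proof -
  have "rank_ge n u i c \<le> rank_ge n v i c \<longleftrightarrow> count_ge (u ` {..i}) c \<le> count_ge (v ` {..i}) c"
    if "Suc i < n" for i c
    using that rank_ge_eq_count_ge[OF u, of i c] rank_ge_eq_count_ge[OF v, of i c] by simp
  moreover have "rank_ge n u i c \<le> rank_ge n v i c" if "\<not> Suc i < n" for i c
    using that rank_ge_beyond_last[OF u] rank_ge_beyond_last[OF v] by simp
  ultimately show ?thesis unfolding tableau_le_def by blast
qed

lemma lchain_imp_bruhat_le: "lchain n k u v \<Longrightarrow> u permutes {..<n} \<Longrightarrow> bruhat_le n u v"
proof (induction rule: lchain.induct)
  case (base u) then show ?case by (rule bruhat_refl)
next
  case (step t u v)
  then have "bruhat_le n u (t \<circ> u)" by (simp add: bruhat_less_def)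
  moreover from this have "t \<circ> u permutes {..<n}" by (simp add: bruhat_le_def Sn_def)
  ultimately show ?case using step bruhat_trans by blast
qed

lemma lek_imp_bruhat_le: "lek n k u v \<Longrightarrow> bruhat_le n u v"
  unfolding lek_def using lchain_imp_bruhat_le bruhat_refl by (auto simp: Sn_def)

lemma lek_PJ_max_iff:
  assumes u: "u permutes {..<n}" and v: "v permutes {..<n}" and i: "Suc i < n"
  shows "lek n k (PJ_max n i u) (PJ_max n i v) \<longleftrightarrow>
    (\<forall>c. count_ge (u ` {..i}) c \<le> count_ge (v ` {..i}) c)"
proof
  assume "lek n k (PJ_max n i u) (PJ_max n i v)"
  then have "tableau_le n (PJ_max n i u) (PJ_max n i v)" by (intro bruhat_le_imp_tableau_le lek_imp_bruhat_le)
  then show "\<forall>c. count_ge (u ` {..i}) c \<le> count_ge (v ` {..i}) c"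
    using tableau_le_iff_count_ge[OF PJ_max_grassmannian(1)[OF u i] PJ_max_grassmannian(1)[OF v i]] i
      PJ_max_grassmannian(3)[OF u i] PJ_max_grassmannian(3)[OF v i] by auto
next
  assume "\<forall>c. count_ge (u ` {..i}) c \<le> count_ge (v ` {..i}) c"
  then have "lchain n k (PJ_max n i u) (PJ_max n i v) \<and>
      (PJ_max n i u = PJ_max n i v \<or> ninversions n (PJ_max n i u) < ninversions n (PJ_max n i v))"
    using PJ_max_grassmannian[OF u i] PJ_max_grassmannian[OF v i]
    by (intro grassmannian_lchain[OF _ _ _ _ i]) auto
  then show "lek n k (PJ_max n i u) (PJ_max n i v)"
    using PJ_max_grassmannian(1)[OF u i] PJ_max_grassmannian(1)[OF v i]
    by (auto simp: lek_def Sn_def clen_eq_ninversions)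
qed

lemma bruhat_le_iff_lek_PJ_max:
  assumes u: "u permutes {..<n}" and v: "v permutes {..<n}"
  shows "bruhat_le n u v \<longleftrightarrow> (\<forall>i. Suc i < n \<longrightarrow> lek n k (PJ_max n i u) (PJ_max n i v))"
  using bruhat_le_iff_tableau_le[OF u v] tableau_le_iff_count_ge[OF u v] lek_PJ_max_iff[OF u v]
  by blast

lemma list_all2_phi_iff:
  "list_all2 P (phi n u) (phi n v) \<longleftrightarrow> (\<forall>i. Suc i < n \<longrightarrow> P (PJ_max n i u) (PJ_max n i v))"
  by (auto simp: list_all2_conv_all_nth phi_def less_diff_conv)

lemma inj_on_phi: "inj_on (phi n) (Sn n)"
proof (rule inj_onI)
  fix u v assume u: "u \<in> Sn n" and v: "v \<in> Sn n" and "phi n u = phi n v"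
  then have proj: "PJ_max n i u = PJ_max n i v" if "Suc i < n" for i
    using list_all2_phi_iff[of "(=)" n u v] that by (simp add: list.rel_eq)
  show "u = v"
  proof (rule permutes_eq_of_initial_images)
    show "u permutes {..<n}" "v permutes {..<n}" using u v by (simp_all add: Sn_def)
    then show "u ` {..i} = v ` {..i}" if "Suc i < n" for i
      using PJ_max_grassmannian(3) proj that by metis
  qed
qed

theorem proposition3p11:
  fixes n k :: nat
  assumes "n \<ge> 2"
  shows "\<exists>f. bij_betw f (Sn n) (phi n ` Sn n) \<and>
           (\<forall>u\<in>Sn n. \<forall>v\<in>Sn n. bruhat_le n u v \<longleftrightarrow> list_all2 (lek n k) (f u) (f v))"
proof (intro exI conjI)
  show "bij_betw (phi n) (Sn n) (phi n ` Sn n)"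
    by (rule inj_on_imp_bij_betw[OF inj_on_phi])
  show "\<forall>u\<in>Sn n. \<forall>v\<in>Sn n. bruhat_le n u v \<longleftrightarrow> list_all2 (lek n k) (phi n u) (phi n v)"
    using bruhat_le_iff_lek_PJ_max list_all2_phi_iff by (simp add: Sn_def)
qed

end
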